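(* Let $d\ge 1$, $T\ge 1$, let $\mathcal{X}\subseteq\mathbb{R}^d$ be a non-empty closed convex set, and let $0<\mu\le L$. Let $f_1,\dots,f_T:\mathcal{X}\to[0,\infty)$ be differentiable with $\frac{\mu}{2}\|y-x\|^2\le f_t(y)-f_t(x)-\langle\nabla f_t(x),y-x\rangle\le\frac{L}{2}\|y-x\|^2$ for all $t$ and $x,y\in\mathcal{X}$. Let $x_1,\dots,x_T$ be the iterates of the OMGD algorithm with $K=\lceil\frac{L+\mu}{2\mu}\ln4\rceil$ from a starting point $x_0\in\mathcal{X}$. Then $$\sum_{t=2}^T\|x_t-x_{t-1}\|\le 3\|x_1-x_1^\star\|+3\mathcal{P}_T^\star.$$
   Context: $x_t^\star=\arg\min_{x\in\mathcal{X}}f_t(x)$ and $\mathcal{P}_T^\star=\sum_{t=2}^T\|x_t^\star-x_{t-1}^\star\|$. OMGD with parameter $K$: $x_1=x_0$; for $t=2,\dots,T$, $z_t^{(0)}=x_{t-1}$, $z_t^{(k)}=\Pi_{\mathcal{X}}\big(z_t^{(k-1)}-\frac1L\nabla f_{t-1}(z_t^{(k-1)})\big)$ ($k=1,\dots,K$), $x_t=z_t^{(K)}$, where $\Pi_{\mathcal{X}}$ is Euclidean projection onto $\mathcal{X}$. *)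

theory Defs
  imports "HOL-Analysis.Analysis"
begin

text \<open>Minimiser of f t over X (unique by strong convexity; chosen by SOME).\<close>
definition minimizer :: "'a set \<Rightarrow> ('a \<Rightarrow> real) \<Rightarrow> 'a" where
  "minimizer X h = (SOME x. x \<in> X \<and> (\<forall>y\<in>X. h x \<le> h y))"

definition omgd_step :: "'a::euclidean_space set \<Rightarrow> real \<Rightarrow> (nat \<Rightarrow> 'a \<Rightarrow> 'a) \<Rightarrow> nat \<Rightarrow> 'a \<Rightarrow> 'a" where
  "omgd_step X L g s z = closest_point X (z - (1 / L) *\<^sub>R g s z)"

fun omgd :: "'a::euclidean_space set \<Rightarrow> real \<Rightarrow> (nat \<Rightarrow> 'a \<Rightarrow> 'a) \<Rightarrow> nat \<Rightarrow> 'a \<Rightarrow> nat \<Rightarrow> 'a" where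
  "omgd X L g K x0 0 = x0"
| "omgd X L g K x0 (Suc 0) = x0"
| "omgd X L g K x0 (Suc (Suc n)) =
     ((omgd_step X L g (Suc n)) ^^ K) (omgd X L g K x0 (Suc n))"

end

(* A projected gradient step with step size 1/L on a \<mu>-strongly convex, L-smooth function
   multiplies the squared distance to its minimiser by at most (L - \<mu>) / (L + \<mu>): this
   combines the two quadratic bounds with the variational inequalities of the projection and
   of the minimiser.  The choice of K makes the K-th power of that factor at most 1/4, so
   every round of OMGD at least halves the distance to the minimiser of the previous loss:
   |x(t+1) - x*(t)| \<le> |x(t) - x*(t)| / 2.  Two triangle inequalities then show that the
   potential  sum_{2 \<le> u \<le> t} |x(u) - x(u-1)| + 3 |x(t) - x*(t)|  grows by at most
   3 |x*(t+1) - x*(t)| per round. *)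

theory Submission
  imports Defs
begin

lemma strongly_convex_attains_min:
  fixes X :: "'a::{real_inner,heine_borel} set" and F :: "'a \<Rightarrow> real"
  assumes "closed X" and x0: "x0 \<in> X" and cont: "continuous_on X F" and "\<mu> > 0"
    and sc: "\<And>x y. x \<in> X \<Longrightarrow> y \<in> X \<Longrightarrow> \<mu> / 2 * (norm (y - x))\<^sup>2 \<le> F y - F x - G x \<bullet> (y - x)"
  shows "\<exists>m\<in>X. \<forall>y\<in>X. F m \<le> F y"
proof -
  define R where "R = 2 * norm (G x0) / \<mu>"
  define S where "S = X \<inter> cball x0 R"
  have x0S: "x0 \<in> S"
    using x0 \<open>\<mu> > 0\<close> by (simp add: S_def R_def)
  have "compact S"
    unfolding S_def using \<open>closed X\<close> by auto
  moreover have "continuous_on S F"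
    using cont by (rule continuous_on_subset) (simp add: S_def)
  ultimately obtain m where "m \<in> S" and m_min: "\<forall>y\<in>S. F m \<le> F y"
    using continuous_attains_inf x0S by blast
  have "F m \<le> F y" if "y \<in> X" for y
  proof (cases "y \<in> S")
    case False
    define r where "r = norm (y - x0)"
    have "R < r"
      using False \<open>y \<in> X\<close> by (simp add: S_def r_def dist_norm norm_minus_commute)
    moreover have "0 \<le> R"
      using \<open>\<mu> > 0\<close> by (simp add: R_def)
    ultimately have "0 < r"
      by linarith
    have "norm (G x0) < \<mu> / 2 * r"
      using \<open>R < r\<close> \<open>\<mu> > 0\<close> by (simp add: R_def field_simps)
    with \<open>0 < r\<close> have "0 < r * (\<mu> / 2 * r - norm (G x0))"
      by simp
    moreover have "- (G x0 \<bullet> (y - x0)) \<le> norm (G x0) * r"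
      using norm_cauchy_schwarz[of "- G x0" "y - x0"] by (simp add: r_def)
    moreover have "F x0 + G x0 \<bullet> (y - x0) + \<mu> / 2 * r\<^sup>2 \<le> F y"
      using sc[OF x0 \<open>y \<in> X\<close>] by (simp add: r_def)
    ultimately have "F x0 < F y"
      by (simp add: algebra_simps power2_eq_square)
    then show ?thesis
      using m_min x0S by fastforce
  qed (use m_min in auto)
  then show ?thesis
    using \<open>m \<in> S\<close> by (auto simp: S_def)
qed

lemma minimizer_minimal:
  assumes "\<exists>m\<in>X. \<forall>y\<in>X. h m \<le> h y"
  shows "minimizer X h \<in> X" and "\<forall>y\<in>X. h (minimizer X h) \<le> h y"
  using someI_ex[of "\<lambda>x. x \<in> X \<and> (\<forall>y\<in>X. h x \<le> h y)"] assms
  by (auto simp: minimizer_def)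

lemma nonneg_if_nonneg_plus_small_multiple:
  fixes a b :: real
  assumes "\<And>e. 0 < e \<Longrightarrow> e \<le> 1 \<Longrightarrow> 0 \<le> a + e * b"
  shows "0 \<le> a"
proof (rule field_le_epsilon)
  fix \<epsilon> :: real assume "0 < \<epsilon>"
  define e where "e = min 1 (\<epsilon> / (\<bar>b\<bar> + 1))"
  have "0 < e" "e \<le> 1"
    using \<open>0 < \<epsilon>\<close> by (auto simp: e_def)
  have "e * b \<le> e * \<bar>b\<bar>"
    using \<open>0 < e\<close> by (simp add: abs_if)
  also have "\<dots> \<le> \<epsilon> / (\<bar>b\<bar> + 1) * (\<bar>b\<bar> + 1)"
    using \<open>0 < \<epsilon>\<close> by (intro mult_mono) (auto simp: e_def)
  also have "\<dots> = \<epsilon>"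
    by simp
  finally show "0 \<le> a + \<epsilon>"
    using assms[OF \<open>0 < e\<close> \<open>e \<le> 1\<close>] by linarith
qed

lemma smooth_minimizer_variational_inequality:
  fixes X :: "'a::real_inner set" and F :: "'a \<Rightarrow> real"
  assumes "convex X" and "s \<in> X" and "y \<in> X" and s_min: "\<forall>w\<in>X. F s \<le> F w"
    and sm: "\<And>x y. x \<in> X \<Longrightarrow> y \<in> X \<Longrightarrow> F y - F x - G x \<bullet> (y - x) \<le> L / 2 * (norm (y - x))\<^sup>2"
  shows "0 \<le> G s \<bullet> (y - s)"
proof (rule nonneg_if_nonneg_plus_small_multiple)
  fix e :: real assume "0 < e" "e \<le> 1"
  define w where "w = s + e *\<^sub>R (y - s)"
  have "w = (1 - e) *\<^sub>R s + e *\<^sub>R y"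
    by (simp add: w_def algebra_simps)
  then have "w \<in> X"
    using convexD_alt[OF \<open>convex X\<close> \<open>s \<in> X\<close> \<open>y \<in> X\<close>] \<open>0 < e\<close> \<open>e \<le> 1\<close> by simp
  then have "0 \<le> e * (G s \<bullet> (y - s)) + L / 2 * (norm (e *\<^sub>R (y - s)))\<^sup>2"
    using sm[OF \<open>s \<in> X\<close>] s_min by (fastforce simp: w_def)
  also have "\<dots> = e * (G s \<bullet> (y - s) + e * (L / 2 * (norm (y - s))\<^sup>2))"
    using \<open>0 < e\<close> by (simp add: power_mult_distrib power2_eq_square distrib_left)
  finally show "0 \<le> G s \<bullet> (y - s) + e * (L / 2 * (norm (y - s))\<^sup>2)"
    using \<open>0 < e\<close> by (simp add: zero_le_mult_iff)
qed

lemma projected_gradient_step_contraction: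
  fixes X :: "'a::{real_inner,heine_borel} set" and F :: "'a \<Rightarrow> real"
  assumes "convex X" and "closed X" and "s \<in> X" and "z \<in> X"
    and s_min: "\<forall>w\<in>X. F s \<le> F w" and "L > 0"
    and sc: "\<And>x y. x \<in> X \<Longrightarrow> y \<in> X \<Longrightarrow> \<mu> / 2 * (norm (y - x))\<^sup>2 \<le> F y - F x - G x \<bullet> (y - x)"
    and sm: "\<And>x y. x \<in> X \<Longrightarrow> y \<in> X \<Longrightarrow> F y - F x - G x \<bullet> (y - x) \<le> L / 2 * (norm (y - x))\<^sup>2"
  shows "(L + \<mu>) * (norm (closest_point X (z - (1 / L) *\<^sub>R G z) - s))\<^sup>2
           \<le> (L - \<mu>) * (norm (z - s))\<^sup>2"
proof -
  define p where "p = closest_point X (z - (1 / L) *\<^sub>R G z)"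
  have "p \<in> X"
    using closest_point_in_set[OF \<open>closed X\<close>] \<open>s \<in> X\<close> by (auto simp: p_def)
  have "(z - (1 / L) *\<^sub>R G z - p) \<bullet> (s - p) \<le> 0"
    unfolding p_def by (rule closest_point_dot[OF \<open>convex X\<close> \<open>closed X\<close> \<open>s \<in> X\<close>])
  then have "(z - p) \<bullet> (s - p) \<le> (1 / L) * (G z \<bullet> (s - p))"
    by (simp add: inner_diff_left)
  then have proj: "L * ((z - p) \<bullet> (s - p)) \<le> G z \<bullet> (s - p)"
    using \<open>L > 0\<close> by (simp add: field_simps)
  have upper: "F p \<le> F z + G z \<bullet> (p - z) + L / 2 * (norm (p - z))\<^sup>2"
    using sm[OF \<open>z \<in> X\<close> \<open>p \<in> X\<close>] by simp
  have lower_s: "F z + G z \<bullet> (s - z) + \<mu> / 2 * (norm (z - s))\<^sup>2 \<le> F s"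
    using sc[OF \<open>z \<in> X\<close> \<open>s \<in> X\<close>] by (simp add: norm_minus_commute)
  have lower_p: "F s + \<mu> / 2 * (norm (p - s))\<^sup>2 \<le> F p"
    using sc[OF \<open>s \<in> X\<close> \<open>p \<in> X\<close>]
      smooth_minimizer_variational_inequality[OF \<open>convex X\<close> \<open>s \<in> X\<close> \<open>p \<in> X\<close> s_min sm]
    by simp
  have "G z \<bullet> (p - z) - G z \<bullet> (s - z) + L / 2 * (norm (p - z))\<^sup>2
      = L / 2 * (norm (p - z))\<^sup>2 - G z \<bullet> (s - p)"
    by (simp add: inner_diff_right)
  also have "\<dots> \<le> L / 2 * ((norm (p - z))\<^sup>2 - 2 * ((z - p) \<bullet> (s - p)))"
    using proj by (simp add: right_diff_distrib)
  also have "(norm (p - z))\<^sup>2 - 2 * ((z - p) \<bullet> (s - p)) = (norm (z - s))\<^sup>2 - (norm (p - s))\<^sup>2"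
    by (simp add: power2_norm_eq_inner inner_diff_left inner_diff_right inner_commute)
  finally have "\<mu> / 2 * (norm (p - s))\<^sup>2 + \<mu> / 2 * (norm (z - s))\<^sup>2
      \<le> L / 2 * ((norm (z - s))\<^sup>2 - (norm (p - s))\<^sup>2)"
    using upper lower_s lower_p by linarith
  then show ?thesis
    by (simp add: p_def[symmetric] algebra_simps)
qed

lemma funpow_in_set:
  assumes "\<And>w. w \<in> X \<Longrightarrow> \<Phi> w \<in> X" and "z \<in> X"
  shows "(\<Phi> ^^ n) z \<in> X"
  by (induction n) (simp_all add: assms)

lemma funpow_dist_le_geometric:
  fixes s :: "'a::metric_space"
  assumes maps: "\<And>w. w \<in> X \<Longrightarrow> \<Phi> w \<in> X"
    and contr: "\<And>w. w \<in> X \<Longrightarrow> dist (\<Phi> w) s \<le> c * dist w s"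
    and "0 \<le> c" and "z \<in> X"
  shows "dist ((\<Phi> ^^ n) z) s \<le> c ^ n * dist z s"
proof (induction n)
  case (Suc n)
  have "dist ((\<Phi> ^^ Suc n) z) s \<le> c * dist ((\<Phi> ^^ n) z) s"
    using contr[OF funpow_in_set[OF maps \<open>z \<in> X\<close>]] by simp
  also have "\<dots> \<le> c * (c ^ n * dist z s)"
    using Suc.IH \<open>0 \<le> c\<close> by (rule mult_left_mono)
  finally show ?case
    by (simp add: mult.assoc)
qed simp

lemma contraction_factor_pow_le_quarter:
  fixes \<mu> L :: real
  assumes "0 < \<mu>" and "\<mu> \<le> L"
  shows "((L - \<mu>) / (L + \<mu>)) ^ nat \<lceil>(L + \<mu>) / (2 * \<mu>) * ln 4\<rceil> \<le> 1 / 4"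
proof -
  define a where "a = 2 * \<mu> / (L + \<mu>)"
  define K where "K = nat \<lceil>(L + \<mu>) / (2 * \<mu>) * ln 4\<rceil>"
  have "0 < a" and "a \<le> 1"
    using assms by (auto simp: a_def field_simps)
  have q: "(L - \<mu>) / (L + \<mu>) = 1 - a"
    using assms by (simp add: a_def field_simps)
  have "ln 4 = a * ((L + \<mu>) / (2 * \<mu>) * ln 4)"
    using assms by (simp add: a_def)
  also have "\<dots> \<le> a * real K"
    using \<open>0 < a\<close> by (intro mult_left_mono) (simp_all add: K_def, linarith)
  finally have aK: "ln 4 \<le> a * real K" .
  have "(1 - a) ^ K \<le> exp (- a) ^ K"
    using \<open>a \<le> 1\<close> exp_ge_add_one_self[of "- a"] by (intro power_mono) auto
  also have "\<dots> = exp (- (a * real K))"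
    by (simp add: exp_of_nat_mult[symmetric] algebra_simps)
  also have "\<dots> \<le> exp (- ln 4)"
    using aK by simp
  also have "\<dots> = 1 / 4"
    by (simp add: exp_minus)
  finally show ?thesis
    by (simp add: q K_def)
qed

lemma omgd_step_funpow_halves_dist:
  fixes X :: "'a::euclidean_space set" and F :: "'a \<Rightarrow> real"
  assumes "convex X" and "closed X" and "s \<in> X" and "z \<in> X"
    and s_min: "\<forall>w\<in>X. F s \<le> F w" and "0 < \<mu>" and "\<mu> \<le> L"
    and sc: "\<And>x y. x \<in> X \<Longrightarrow> y \<in> X \<Longrightarrow> \<mu> / 2 * (norm (y - x))\<^sup>2 \<le> F y - F x - g t x \<bullet> (y - x)"
    and sm: "\<And>x y. x \<in> X \<Longrightarrow> y \<in> X \<Longrightarrow> F y - F x - g t x \<bullet> (y - x) \<le> L / 2 * (norm (y - x))\<^sup>2"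
  shows "norm ((omgd_step X L g t ^^ nat \<lceil>(L + \<mu>) / (2 * \<mu>) * ln 4\<rceil>) z - s) \<le> norm (z - s) / 2"
proof -
  define q where "q = (L - \<mu>) / (L + \<mu>)"
  define K where "K = nat \<lceil>(L + \<mu>) / (2 * \<mu>) * ln 4\<rceil>"
  have "0 \<le> q"
    using assms by (simp add: q_def)
  have maps: "omgd_step X L g t w \<in> X" for w
    using closest_point_in_set[OF \<open>closed X\<close>] \<open>s \<in> X\<close> by (auto simp: omgd_step_def)
  have "dist (omgd_step X L g t w) s \<le> sqrt q * dist w s" if "w \<in> X" for w
  proof -
    have "(norm (omgd_step X L g t w - s))\<^sup>2 \<le> q * (norm (w - s))\<^sup>2"
      using projected_gradient_step_contraction[OF \<open>convex X\<close> \<open>closed X\<close> \<open>s \<in> X\<close> \<open>w \<in> X\<close>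
          s_min _ sc sm] assms
      by (simp add: omgd_step_def q_def field_simps)
    then have "sqrt ((norm (omgd_step X L g t w - s))\<^sup>2) \<le> sqrt (q * (norm (w - s))\<^sup>2)"
      by (rule real_sqrt_le_mono)
    then show ?thesis
      by (simp add: real_sqrt_mult dist_norm)
  qed
  then have "dist ((omgd_step X L g t ^^ K) z) s \<le> sqrt q ^ K * dist z s"
    using funpow_dist_le_geometric[OF maps] \<open>0 \<le> q\<close> \<open>z \<in> X\<close> by simp
  moreover have "sqrt q ^ K \<le> 1 / 2"
  proof -
    have "sqrt q ^ K = sqrt (q ^ K)"
      by (simp add: real_sqrt_power)
    also have "\<dots> \<le> sqrt (1 / 4)"
      using contraction_factor_pow_le_quarter[OF \<open>0 < \<mu>\<close> \<open>\<mu> \<le> L\<close>]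
      unfolding q_def K_def by (rule real_sqrt_le_mono)
    also have "\<dots> = 1 / 2"
      by (simp add: real_sqrt_divide)
    finally show ?thesis .
  qed
  then have "sqrt q ^ K * dist z s \<le> 1 / 2 * dist z s"
    by (rule mult_right_mono) simp
  finally show ?thesis
    by (simp add: K_def dist_norm)
qed

lemma omgd_in_set:
  assumes "closed X" and "x0 \<in> X"
  shows "omgd X L g K x0 t \<in> X"
proof -
  have step_maps: "omgd_step X L g n w \<in> X" for n w
    using closest_point_in_set[OF \<open>closed X\<close>] \<open>x0 \<in> X\<close> by (auto simp: omgd_step_def)
  have "omgd X L g K x0 (Suc n) \<in> X" for n
    by (induction n) (simp_all add: \<open>x0 \<in> X\<close> funpow_in_set step_maps)
  then show ?thesis
    using \<open>x0 \<in> X\<close> by (cases t) simp_all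
qed

lemma sum_norm_steps_le_tracking_bound:
  fixes x s :: "nat \<Rightarrow> 'a::real_normed_vector"
  assumes halving: "\<And>t. 1 \<le> t \<Longrightarrow> t < T \<Longrightarrow> norm (x (Suc t) - s t) \<le> norm (x t - s t) / 2"
  shows "(\<Sum>t = 2..T. norm (x t - x (t - 1)))
           \<le> 3 * norm (x 1 - s 1) + 3 * (\<Sum>t = 2..T. norm (s t - s (t - 1)))"
proof -
  define E where "E n = (\<Sum>t = 2..n. norm (x t - x (t - 1)))" for n
  define P where "P n = (\<Sum>t = 2..n. norm (s t - s (t - 1)))" for n
  define \<delta> where "\<delta> n = norm (x n - s n)" for n
  have potential: "E n + 3 * \<delta> n \<le> 3 * \<delta> 1 + 3 * P n" if "1 \<le> n" "n \<le> T" for n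
    using that
  proof (induction n rule: nat_induct_at_least)
    case (Suc n)
    have near: "norm (x (Suc n) - s n) \<le> \<delta> n / 2"
      using halving[OF \<open>1 \<le> n\<close>] Suc.prems by (simp add: \<delta>_def)
    have "norm (x (Suc n) - x n) \<le> \<delta> n / 2 + \<delta> n"
      using near by (rule norm_diff_triangle_le) (simp add: \<delta>_def norm_minus_commute)
    moreover have "\<delta> (Suc n) \<le> \<delta> n / 2 + norm (s (Suc n) - s n)"
      unfolding \<delta>_def using norm_diff_triangle_le[OF _ order_refl]
      by (metis near[unfolded \<delta>_def] norm_minus_commute)
    moreover have "E (Suc n) = E n + norm (x (Suc n) - x n)"
      and "P (Suc n) = P n + norm (s (Suc n) - s n)"
      using \<open>1 \<le> n\<close> by (simp_all add: E_def P_def)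
    ultimately show ?case
      using Suc.IH Suc.prems by linarith
  qed (simp add: E_def P_def)
  show ?thesis
  proof (cases "T = 0")
    case False
    then have "E T + 3 * \<delta> T \<le> 3 * \<delta> 1 + 3 * P T"
      using potential by simp
    moreover have "0 \<le> \<delta> T"
      by (simp add: \<delta>_def)
    ultimately show ?thesis
      unfolding E_def P_def \<delta>_def by linarith
  qed simp
qed

theorem lemma12:
  fixes X :: "'a::euclidean_space set"
    and f :: "nat \<Rightarrow> 'a \<Rightarrow> real"
    and g :: "nat \<Rightarrow> 'a \<Rightarrow> 'a"
    and \<mu> L :: real and T :: nat and x0 :: 'a
  assumes "T \<ge> 1"
    and "X \<noteq> {}" and "closed X" and "convex X"
    and "0 < \<mu>" and "\<mu> \<le> L"
    and nonneg: "\<And>t x. t \<in> {1..T} \<Longrightarrow> x \<in> X \<Longrightarrow> f t x \<ge> 0"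
    and grad: "\<And>t x. t \<in> {1..T} \<Longrightarrow> x \<in> X \<Longrightarrow>
               (f t has_derivative (\<lambda>h. g t x \<bullet> h)) (at x within X)"
    and sc: "\<And>t x y. t \<in> {1..T} \<Longrightarrow> x \<in> X \<Longrightarrow> y \<in> X \<Longrightarrow>
               \<mu> / 2 * (norm (y - x))\<^sup>2 \<le> f t y - f t x - g t x \<bullet> (y - x)"
    and sm: "\<And>t x y. t \<in> {1..T} \<Longrightarrow> x \<in> X \<Longrightarrow> y \<in> X \<Longrightarrow>
               f t y - f t x - g t x \<bullet> (y - x) \<le> L / 2 * (norm (y - x))\<^sup>2"
    and "x0 \<in> X"
  shows "(\<Sum>t = 2..T. norm (omgd X L g (nat \<lceil>(L + \<mu>) / (2 * \<mu>) * ln 4\<rceil>) x0 t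
                           - omgd X L g (nat \<lceil>(L + \<mu>) / (2 * \<mu>) * ln 4\<rceil>) x0 (t - 1)))
         \<le> 3 * norm (omgd X L g (nat \<lceil>(L + \<mu>) / (2 * \<mu>) * ln 4\<rceil>) x0 1 - minimizer X (f 1))
           + 3 * (\<Sum>t = 2..T. norm (minimizer X (f t) - minimizer X (f (t - 1))))"
proof -
  define K where "K = nat \<lceil>(L + \<mu>) / (2 * \<mu>) * ln 4\<rceil>"
  define x where "x = omgd X L g K x0"
  define s where "s t = minimizer X (f t)" for t
  have s_min: "s t \<in> X" "\<forall>y\<in>X. f t (s t) \<le> f t y" if "t \<in> {1..T}" for t
  proof -
    have "continuous_on X (f t)"
      unfolding continuous_on_eq_continuous_within
      using grad[OF that] has_derivative_continuous by blast
    then have "\<exists>m\<in>X. \<forall>y\<in>X. f t m \<le> f t y"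
      using strongly_convex_attains_min \<open>closed X\<close> \<open>x0 \<in> X\<close> \<open>0 < \<mu>\<close> sc[OF that] by blast
    then show "s t \<in> X" "\<forall>y\<in>X. f t (s t) \<le> f t y"
      unfolding s_def by (rule minimizer_minimal)+
  qed
  have "norm (x (Suc t) - s t) \<le> norm (x t - s t) / 2" if "1 \<le> t" "t < T" for t
  proof -
    have "x (Suc t) = (omgd_step X L g t ^^ K) (x t)"
      using \<open>1 \<le> t\<close> by (cases t) (simp_all add: x_def)
    moreover have "t \<in> {1..T}"
      using that by simp
    ultimately show ?thesis
      using omgd_step_funpow_halves_dist[where g = g and t = t, OF \<open>convex X\<close> \<open>closed X\<close>
          s_min(1) omgd_in_set[OF \<open>closed X\<close> \<open>x0 \<in> X\<close>] s_min(2) \<open>0 < \<mu>\<close> \<open>\<mu> \<le> L\<close> sc sm]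
      by (simp add: x_def K_def)
  qed
  then show ?thesis
    using sum_norm_steps_le_tracking_bound[of T x s] by (simp add: x_def s_def K_def)
qed

end
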